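(* Let $\gamma:[0,1]\to\mathbb{R}^2$ be a continuous curve such that $\gamma(0)=(0,0)$, $\gamma(1)=(1,1)$, and $1>\pi_1\circ\gamma(t)>\pi_2\circ\gamma(t)$ for all $t\in(0,1)$. Then for each $n\in\mathbb{N}$ there exist distinct points $A_1,\ldots,A_{n+1}$ on $\gamma$ such that, setting $A_0=(0,0)$, $A_{n+2}=(1,1)$ and $A_{-1}=A_{n+1}-(1,1)$, $$\pi_2(\overrightarrow{A_iA_{i+1}})=\pi_1(\overrightarrow{A_{i-1}A_i}),\qquad i=0,\ldots,n+1.$$
   Context: $\pi_1(a,b)=a$ and $\pi_2(a,b)=b$ are the coordinate projections; $\overrightarrow{AB}=B-A$. *)

theory Defs
  imports "HOL-Analysis.Analysis"
begin

end

theory Submission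
  imports Defs "HOL-Homology.Brouwer_Degree"
begin

text \<open>Call \<open>c\<close> the common value of \<open>\<pi>\<^sub>2 A\<^sub>i\<^sub>+\<^sub>1 - \<pi>\<^sub>1 A\<^sub>i\<close>; the required identities say exactly that
  this difference is independent of \<open>i\<close>. Taking \<open>c\<close> and the curve parameters of \<open>A\<^sub>1, \<dots>, A\<^sub>n\<^sub>+\<^sub>1\<close>
  as coordinates of the cube \<open>[0,1]\<^sup>n\<^sup>+\<^sup>2\<close>, the chain is a zero of a continuous map which, after
  clamping, has opposite signs on opposite faces, so the Poincare-Miranda theorem (a consequence
  of the non-contractibility of spheres) provides a zero. At a zero the clamps are inactive,
  \<open>c > 0\<close> because the curve reaches height 1 only at its end point, and hence the heights of
  \<open>A\<^sub>1, \<dots>, A\<^sub>n\<^sub>+\<^sub>1\<close> increase strictly, which makes the points distinct.\<close>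

definition sphere_normalize :: "nat \<Rightarrow> (nat \<Rightarrow> real) \<Rightarrow> nat \<Rightarrow> real" where
  "sphere_normalize p v = (\<lambda>i. if i \<le> p then v i / sqrt (\<Sum>j\<le>p. (v j)\<^sup>2) else 0)"

lemma sphere_normalize_scale:
  assumes "x \<in> topspace (nsphere p)" and "c > 0"
  shows "sphere_normalize p (\<lambda>i. c * x i) = x"
proof -
  have x: "(\<Sum>i\<le>p. (x i)\<^sup>2) = 1" "\<And>i. i > p \<Longrightarrow> x i = 0"
    using assms(1) by (auto simp: nsphere)
  have "sqrt (\<Sum>j\<le>p. (c * x j)\<^sup>2) = c"
    using x(1) \<open>c > 0\<close> by (simp add: power_mult_distrib flip: sum_distrib_left)
  then show ?thesis
    using x(2) \<open>c > 0\<close> by (auto simp: sphere_normalize_def fun_eq_iff)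
qed

lemma continuous_map_sphere_normalize:
  assumes cont: "\<And>i. i \<le> p \<Longrightarrow> continuous_map X euclideanreal (\<lambda>z. w z i)"
    and nonzero: "\<And>z. z \<in> topspace X \<Longrightarrow> \<exists>i\<le>p. w z i \<noteq> 0"
  shows "continuous_map X (nsphere p) (\<lambda>z. sphere_normalize p (w z))"
  unfolding nsphere continuous_map_in_subtopology
proof
  have pos: "(\<Sum>j\<le>p. (w z j)\<^sup>2) > 0" if "z \<in> topspace X" for z
    using nonzero[OF that] by (force simp: less_le sum_nonneg sum_nonneg_eq_0_iff)
  show "continuous_map X (powertop_real UNIV) (\<lambda>z. sphere_normalize p (w z))"
    unfolding continuous_map_componentwise_UNIV sphere_normalize_def
    by (auto intro!: continuous_intros cont dest: pos)
  show "(\<lambda>z. sphere_normalize p (w z)) \<in> topspace X \<rightarrow>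
          {x. (\<Sum>i\<le>p. (x i)\<^sup>2) = 1 \<and> (\<forall>i>p. x i = 0)}"
  proof
    fix z assume "z \<in> topspace X"
    with pos have "(\<Sum>j\<le>p. (w z j)\<^sup>2) > 0" by blast
    then show "sphere_normalize p (w z) \<in> {x. (\<Sum>i\<le>p. (x i)\<^sup>2) = 1 \<and> (\<forall>i>p. x i = 0)}"
      by (simp add: sphere_normalize_def power_divide flip: sum_divide_distrib)
  qed
qed

lemma homotopic_with_TrueI:
  assumes "continuous_map (prod_topology (top_of_set {0..1::real}) X) Y h"
    and "\<And>x. x \<in> topspace X \<Longrightarrow> h (0, x) = f x"
    and "\<And>x. x \<in> topspace X \<Longrightarrow> h (1, x) = g x"
  shows "homotopic_with (\<lambda>_. True) X Y f g"
  by (subst homotopic_with) (use assms in \<open>auto intro!: exI[where x=h]\<close>)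

lemma continuous_map_scaled_nsphere:
  assumes "continuous_map X euclideanreal c" and "continuous_map X (nsphere p) v"
  shows "continuous_map X (powertop_real UNIV) (\<lambda>z j. c z * v z j)"
  unfolding continuous_map_componentwise_UNIV
  using continuous_map_compose[OF assms(2) continuous_map_nsphere_projection]
  by (auto simp: o_def intro!: continuous_intros assms(1))

lemma nonvanishing_sphere_homotopy_imp_zero:
  fixes \<psi> :: "nat \<Rightarrow> (nat \<Rightarrow> real) \<Rightarrow> real" and R :: real
  assumes cont: "\<And>i. i \<le> p \<Longrightarrow> continuous_map (powertop_real UNIV) euclideanreal (\<psi> i)"
    and "R > 0"
    and boundary: "\<And>x t. (\<Sum>i\<le>p. (x i)\<^sup>2) = R\<^sup>2 \<Longrightarrow> (\<forall>i>p. x i = 0) \<Longrightarrow> t \<in> {0..1} \<Longrightarrow>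
                     \<exists>i\<le>p. t * \<psi> i x + (1 - t) * x i \<noteq> 0"
  shows "\<exists>x. \<forall>i\<le>p. \<psi> i x = 0"
proof (rule ccontr)
  assume "\<nexists>x. \<forall>i\<le>p. \<psi> i x = 0"
  then have nonzero: "\<exists>i\<le>p. \<psi> i x \<noteq> 0" for x
    by blast
  let ?S = "prod_topology (top_of_set {0..1::real}) (nsphere p)"
  have sphere_point: "(\<Sum>i\<le>p. (R * x i)\<^sup>2) = R\<^sup>2 \<and> (\<forall>i>p. R * x i = 0)"
    if "x \<in> topspace (nsphere p)" for x
    using that by (auto simp: nsphere power_mult_distrib simp flip: sum_distrib_left)
  have cont_fst: "continuous_map ?S euclideanreal fst"
    using continuous_map_fst continuous_map_in_subtopology by blast
  have cont_scaled: "continuous_map ?S euclideanreal (\<lambda>z. \<psi> i (\<lambda>j. c z * snd z j))"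
    if "i \<le> p" and "continuous_map ?S euclideanreal c" for i c
    using continuous_map_compose[OF continuous_map_scaled_nsphere[OF that(2) continuous_map_snd]
        cont[OF that(1)]]
    by (simp add: o_def)
  define k where "k x = sphere_normalize p (\<lambda>i. \<psi> i (\<lambda>j. R * x j))" for x
  \<comment> \<open>Normalised, the linear homotopy from the identity to \<open>\<psi>\<close> on the sphere of radius \<open>R\<close>,
     followed by shrinking that sphere to its centre, contracts \<open>nsphere p\<close>.\<close>
  have "homotopic_with (\<lambda>_. True) (nsphere p) (nsphere p) id k"
  proof (rule homotopic_with_TrueI)
    let ?h = "\<lambda>z. sphere_normalize p
                  (\<lambda>i. fst z * \<psi> i (\<lambda>j. R * snd z j) + (1 - fst z) * (R * snd z i))"
    show "continuous_map ?S (nsphere p) ?h"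
    proof (rule continuous_map_sphere_normalize)
      show "continuous_map ?S euclideanreal
              (\<lambda>z. fst z * \<psi> i (\<lambda>j. R * snd z j) + (1 - fst z) * (R * snd z i))" if "i \<le> p" for i
        using that continuous_map_compose[OF continuous_map_snd continuous_map_nsphere_projection]
        by (auto simp: o_def intro!: continuous_intros cont_fst cont_scaled)
      show "\<exists>i\<le>p. fst z * \<psi> i (\<lambda>j. R * snd z j) + (1 - fst z) * (R * snd z i) \<noteq> 0"
        if "z \<in> topspace ?S" for z
        using that boundary[of "\<lambda>j. R * snd z j" "fst z"] sphere_point[of "snd z"] by auto
    qed
    show "?h (0, x) = id x" if "x \<in> topspace (nsphere p)" for x
      using sphere_normalize_scale[OF that \<open>R > 0\<close>] by simp
    show "?h (1, x) = k x" for x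
      by (simp add: k_def)
  qed
  moreover have "homotopic_with (\<lambda>_. True) (nsphere p) (nsphere p) k
                   (\<lambda>_. sphere_normalize p (\<lambda>i. \<psi> i (\<lambda>_. 0)))"
  proof (rule homotopic_with_TrueI)
    let ?h = "\<lambda>z. sphere_normalize p (\<lambda>i. \<psi> i (\<lambda>j. (R - R * fst z) * snd z j))"
    show "continuous_map ?S (nsphere p) ?h"
      by (rule continuous_map_sphere_normalize)
        (auto intro!: continuous_intros cont_fst cont_scaled nonzero)
  qed (simp_all add: k_def)
  ultimately have "contractible_space (nsphere p)"
    unfolding contractible_space_def by (metis homotopic_with_trans)
  then show False
    using non_contractible_space_nsphere by blast
qed

lemma poincare_miranda:
  fixes f :: "nat \<Rightarrow> (nat \<Rightarrow> real) \<Rightarrow> real" and p :: nat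
  assumes cont: "\<And>i. i \<le> p \<Longrightarrow>
             continuous_map (subtopology (powertop_real UNIV) (UNIV \<rightarrow> {0..1})) euclideanreal (f i)"
    and lower: "\<And>i x. i \<le> p \<Longrightarrow> x \<in> UNIV \<rightarrow> {0..1} \<Longrightarrow> x i = 0 \<Longrightarrow> f i x \<le> 0"
    and upper: "\<And>i x. i \<le> p \<Longrightarrow> x \<in> UNIV \<rightarrow> {0..1} \<Longrightarrow> x i = 1 \<Longrightarrow> f i x \<ge> 0"
  obtains x where "x \<in> UNIV \<rightarrow> {0..1}" and "\<And>i. i \<le> p \<Longrightarrow> f i x = 0"
proof -
  define r where "r y = (\<lambda>i. max 0 (min 1 (y i)))" for y :: "nat \<Rightarrow> real"
  define \<psi> where "\<psi> i y = f i (r y) + (y i - r y i)" for i y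
  have r_cube: "r y \<in> UNIV \<rightarrow> {0..1}" for y
    by (simp add: r_def)
  have "continuous_map (powertop_real UNIV)
          (subtopology (powertop_real UNIV) (UNIV \<rightarrow> {0..1})) r"
    unfolding continuous_map_in_subtopology continuous_map_componentwise_UNIV r_def
    by (auto intro!: continuous_intros)
  then have cont_\<psi>: "continuous_map (powertop_real UNIV) euclideanreal (\<psi> i)" if "i \<le> p" for i
    unfolding \<psi>_def r_def
    using continuous_map_compose[OF _ cont[OF that]]
    by (auto simp: o_def intro!: continuous_intros)
  have outward: "y i * \<psi> i y > 0" if "i \<le> p" and "y i \<notin> {0..1}" for i y
  proof (cases "y i < 0")
    case True
    then have "\<psi> i y < 0"
      using lower[OF that(1) r_cube, of y] by (simp add: \<psi>_def r_def)
    with True show ?thesis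
      by (simp add: mult_neg_neg)
  next
    case False
    then have "y i > 1" "\<psi> i y > 0"
      using that upper[OF that(1) r_cube, of y] by (auto simp: \<psi>_def r_def)
    then show ?thesis
      by simp
  qed
  define R where "R = real p + 2"
  have "\<exists>x. \<forall>i\<le>p. \<psi> i x = 0"
  proof (rule nonvanishing_sphere_homotopy_imp_zero[OF cont_\<psi>])
    show "R > 0"
      by (simp add: R_def)
    fix y :: "nat \<Rightarrow> real" and t :: real
    assume y: "(\<Sum>i\<le>p. (y i)\<^sup>2) = R\<^sup>2" and t: "t \<in> {0..1}"
    have "\<exists>i\<le>p. y i \<notin> {0..1}"
    proof (rule ccontr)
      assume "\<not> (\<exists>i\<le>p. y i \<notin> {0..1})"
      then have "(\<Sum>i\<le>p. (y i)\<^sup>2) \<le> (\<Sum>i\<le>p. 1)"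
        by (intro sum_mono) (auto simp: power_le_one)
      with y show False
        using zero_le_square[of "real p"] by (simp add: R_def power2_eq_square algebra_simps)
    qed
    then obtain i where i: "i \<le> p" "y i \<notin> {0..1}"
      by blast
    have "y i * (t * \<psi> i y + (1 - t) * y i) = t * (y i * \<psi> i y) + (1 - t) * (y i)\<^sup>2"
      by (simp add: algebra_simps power2_eq_square)
    also have "\<dots> > 0"
      using outward[of i y, OF i] t i(2)
      by (cases "t = 0") (auto intro: add_pos_nonneg add_nonneg_pos)
    finally show "\<exists>i\<le>p. t * \<psi> i y + (1 - t) * y i \<noteq> 0"
      using i(1) by force
  qed
  then obtain y where y: "\<And>i. i \<le> p \<Longrightarrow> \<psi> i y = 0"
    by blast
  have "y i \<in> {0..1}" if "i \<le> p" for i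
    using outward[of i y, OF that] y[OF that] by fastforce
  then have "f i (r y) = 0" if "i \<le> p" for i
    using y[OF that] that by (simp add: \<psi>_def r_def)
  then show thesis
    using that r_cube by blast
qed

lemma continuous_map_cube_coordinate:
  fixes g :: "real \<Rightarrow> real"
  assumes "continuous_on {0..1} g"
  shows "continuous_map (subtopology (powertop_real UNIV) (UNIV \<rightarrow> {0..1})) euclideanreal
           (\<lambda>x. g (x k))"
proof -
  have "continuous_map (subtopology (powertop_real UNIV) (UNIV \<rightarrow> {0..1})) (top_of_set {0..1})
          (\<lambda>x. x k)"
    by (auto simp: continuous_map_in_subtopology
        intro: continuous_map_from_subtopology continuous_map_product_projection)
  from continuous_map_compose[OF this, of euclideanreal g] assms show ?thesis
    by (simp add: o_def)
qed

locale curve_staircase =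
  fixes \<gamma> :: "real \<Rightarrow> real \<times> real" and n :: nat
  assumes continuous: "continuous_on {0..1} \<gamma>"
    and start: "\<gamma> 0 = (0, 0)" and finish: "\<gamma> 1 = (1, 1)"
    and interior: "\<forall>t\<in>{0<..<1}. 1 > fst (\<gamma> t) \<and> fst (\<gamma> t) > snd (\<gamma> t)"
begin

lemma
  assumes "t \<in> {0..1}"
  shows curve_snd_le_fst: "snd (\<gamma> t) \<le> fst (\<gamma> t)"
    and curve_fst_le_1: "fst (\<gamma> t) \<le> 1"
    and curve_fst_eq_1_iff: "fst (\<gamma> t) = 1 \<longleftrightarrow> t = 1"
    and curve_snd_eq_1_iff: "snd (\<gamma> t) = 1 \<longleftrightarrow> t = 1"
proof -
  consider "t = 0" | "t = 1" | "t \<in> {0<..<1}"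
    using assms by fastforce
  then show "snd (\<gamma> t) \<le> fst (\<gamma> t)" "fst (\<gamma> t) \<le> 1"
    "fst (\<gamma> t) = 1 \<longleftrightarrow> t = 1" "snd (\<gamma> t) = 1 \<longleftrightarrow> t = 1"
    using start finish interior by (cases; force)+
qed

text \<open>A point \<open>T\<close> of the cube encodes a candidate chain: \<open>T 0\<close> is the common value \<open>c\<close> of
  \<open>\<pi>\<^sub>2 A\<^sub>i\<^sub>+\<^sub>1 - \<pi>\<^sub>1 A\<^sub>i\<close> and \<open>T j\<close> is the curve parameter of \<open>A\<^sub>j\<close> for \<open>1 \<le> j \<le> n + 1\<close>; \<open>abscissa T j\<close>
  is \<open>\<pi>\<^sub>1 A\<^sub>j\<close> with \<open>A\<^sub>0 = (0, 0)\<close>.\<close>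

definition abscissa :: "(nat \<Rightarrow> real) \<Rightarrow> nat \<Rightarrow> real" where
  "abscissa T j = (if j = 0 then 0 else fst (\<gamma> (T j)))"

definition defect :: "(nat \<Rightarrow> real) \<Rightarrow> nat \<Rightarrow> real" where
  "defect T k = (if k = 0 then T 0 + max 0 (abscissa T (n + 1)) - 1
     else snd (\<gamma> (T k)) - T 0 - max (- T 0) (min (1 - T 0) (abscissa T (k - 1))))"

lemma continuous_defect:
  "continuous_map (subtopology (powertop_real UNIV) (UNIV \<rightarrow> {0..1})) euclideanreal
     (\<lambda>T. defect T k)"
proof -
  have "continuous_on {0..1} (\<lambda>t. fst (\<gamma> t))" "continuous_on {0..1} (\<lambda>t. snd (\<gamma> t))"
    "continuous_on {0..1} (\<lambda>t::real. t)"
    using continuous by (auto intro: continuous_intros)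
  note coordinates = this[THEN continuous_map_cube_coordinate]
  show ?thesis
    by (cases "k = 0"; cases "k = 1")
      (auto simp: defect_def abscissa_def intro!: continuous_intros coordinates)
qed

lemma defect_nonpos_at_lower_face:
  assumes "T \<in> UNIV \<rightarrow> {0..1}" and "T k = 0"
  shows "defect T k \<le> 0"
  using assms curve_fst_le_1[of "T (n + 1)"] start
  by (auto simp: defect_def abscissa_def Pi_iff)

lemma defect_nonneg_at_upper_face:
  assumes "T \<in> UNIV \<rightarrow> {0..1}" and "T k = 1"
  shows "defect T k \<ge> 0"
  using assms finish by (auto simp: defect_def)

context
  fixes T :: "nat \<Rightarrow> real"
  assumes cube: "T \<in> UNIV \<rightarrow> {0..1}"
    and defect_zero: "\<And>k. k \<le> n + 1 \<Longrightarrow> defect T k = 0"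
begin

lemma parameter_in_01: "T j \<in> {0..1}"
  using cube by auto

lemma abscissa_le_1: "abscissa T j \<le> 1"
  using curve_fst_le_1[OF parameter_in_01] by (simp add: abscissa_def)

lemma ordinate_nonneg: "1 \<le> k \<Longrightarrow> k \<le> n + 1 \<Longrightarrow> 0 \<le> snd (\<gamma> (T k))"
  using defect_zero[of k] by (auto simp: defect_def)

lemma abscissa_nonneg: "k \<le> n + 1 \<Longrightarrow> 0 \<le> abscissa T k"
  using ordinate_nonneg[of k] curve_snd_le_fst[OF parameter_in_01[of k]]
  by (auto simp: abscissa_def)

lemma abscissa_last: "abscissa T (n + 1) + T 0 = 1"
  using defect_zero[of 0] abscissa_nonneg[of "n + 1"] by (simp add: defect_def)

lemma parameter_stays_1:
  assumes "1 \<le> k" and "k \<le> m" and "m \<le> n + 1" and "T k = 1"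
  shows "T m = 1"
  using \<open>k \<le> m\<close> \<open>m \<le> n + 1\<close>
proof (induction m rule: dec_induct)
  case base
  show ?case using \<open>T k = 1\<close> .
next
  case (step m)
  then have "abscissa T m = 1"
    using finish \<open>1 \<le> k\<close> by (simp add: abscissa_def)
  then have "snd (\<gamma> (T (Suc m))) = 1"
    using defect_zero[of "Suc m"] step.prems parameter_in_01[of 0] by (simp add: defect_def)
  then show ?case
    using curve_snd_eq_1_iff[OF parameter_in_01] by blast
qed

lemma ordinate_eq_step:
  assumes "1 \<le> k" and "k \<le> n + 1"
  shows "snd (\<gamma> (T k)) = abscissa T (k - 1) + T 0"
proof -
  have "abscissa T (k - 1) \<le> 1 - T 0"
  proof (rule ccontr)
    assume "\<not> abscissa T (k - 1) \<le> 1 - T 0"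
    then have "snd (\<gamma> (T k)) = 1"
      using defect_zero[OF assms(2)] assms(1) parameter_in_01[of 0] by (auto simp: defect_def)
    then have "T (n + 1) = 1"
      using parameter_stays_1[OF assms(1) assms(2)] curve_snd_eq_1_iff[OF parameter_in_01]
      by blast
    then have "T 0 = 0"
      using abscissa_last finish by (simp add: abscissa_def)
    with \<open>\<not> abscissa T (k - 1) \<le> 1 - T 0\<close> abscissa_le_1[of "k - 1"] show False
      by simp
  qed
  moreover have "0 \<le> abscissa T (k - 1)"
    using assms(2) by (intro abscissa_nonneg) simp
  then have "- T 0 \<le> abscissa T (k - 1)"
    using parameter_in_01[of 0] by simp
  ultimately show ?thesis
    using assms defect_zero[OF assms(2)] by (simp add: defect_def)
qed

lemma step_pos: "0 < T 0"
proof (rule ccontr)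
  assume "\<not> 0 < T 0"
  then have "T 0 = 0"
    using parameter_in_01[of 0] by simp
  have "T j = 1" if "1 \<le> j" and "j \<le> n + 1" for j
    using \<open>j \<le> n + 1\<close>
  proof (induction j rule: inc_induct)
    case base
    show ?case
      using abscissa_last \<open>T 0 = 0\<close> curve_fst_eq_1_iff[OF parameter_in_01]
      by (simp add: abscissa_def)
  next
    case (step m)
    then have "snd (\<gamma> (T (Suc m))) = 1"
      using finish by simp
    then have "fst (\<gamma> (T m)) = 1"
      using ordinate_eq_step[of "Suc m"] step.hyps \<open>1 \<le> j\<close> \<open>T 0 = 0\<close>
      by (simp add: abscissa_def)
    then show ?case
      using curve_fst_eq_1_iff[OF parameter_in_01] by blast
  qed
  then have "snd (\<gamma> (T 1)) = 1"
    using finish by simp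
  moreover have "snd (\<gamma> (T 1)) = 0"
    using ordinate_eq_step[of 1] \<open>T 0 = 0\<close> by (simp add: abscissa_def)
  ultimately show False
    by simp
qed

lemma ordinate_strict_mono: "strict_mono_on {1..n + 1} (\<lambda>k. snd (\<gamma> (T k)))"
proof (rule strict_mono_onI)
  fix i j :: nat
  assume "i \<in> {1..n + 1}" and "j \<in> {1..n + 1}" and "i < j"
  have "snd (\<gamma> (T m)) < snd (\<gamma> (T (Suc m)))" if "m \<in> {i..<j}" for m
  proof -
    have "snd (\<gamma> (T (Suc m))) = fst (\<gamma> (T m)) + T 0"
      using ordinate_eq_step[of "Suc m"] that \<open>i \<in> _\<close> \<open>j \<in> _\<close> by (simp add: abscissa_def)
    then show ?thesis
      using step_pos curve_snd_le_fst[OF parameter_in_01[of m]] by simp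
  qed
  from lift_Suc_mono_less_ivl[where f = "\<lambda>k. snd (\<gamma> (T k))", OF this \<open>i < j\<close> order_refl]
  show "snd (\<gamma> (T i)) < snd (\<gamma> (T j))" .
qed

lemma staircase_exists:
  "\<exists>A :: int \<Rightarrow> real \<times> real.
     inj_on A {1..int n + 1} \<and>
     A ` {1..int n + 1} \<subseteq> \<gamma> ` {0..1} \<and>
     A 0 = (0, 0) \<and> A (int n + 2) = (1, 1) \<and>
     A (-1) = A (int n + 1) - (1, 1) \<and>
     (\<forall>i\<in>{0..int n + 1}. snd (A (i + 1) - A i) = fst (A i - A (i - 1)))"
proof -
  define A where "A i = (if i = -1 then \<gamma> (T (n + 1)) - (1, 1) else if i = 0 then (0, 0)
      else if i = int n + 2 then (1, 1) else \<gamma> (T (nat i)))" for i :: int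
  have A_curve: "A i = \<gamma> (T (nat i))" if "i \<in> {1..int n + 1}" for i
    using that by (auto simp: A_def)
  have fst_A: "fst (A (int j)) = abscissa T j" if "j \<le> n + 1" for j
    using that A_curve[of "int j"] by (cases "j = 0") (auto simp: A_def abscissa_def)
  have staircase: "snd (A (i + 1)) = fst (A i) + T 0" if i: "i \<in> {-1..int n + 1}" for i
  proof -
    consider "i = -1" | "i = int n + 1" | "0 \<le> i" "i \<le> int n"
      using i by force
    then show ?thesis
    proof cases
      case 1
      then show ?thesis
        using abscissa_last by (simp add: A_def abscissa_def)
    next
      case 2
      then show ?thesis
        using abscissa_last fst_A[of "n + 1"] by (simp add: A_def nat_add_distrib)
    next
      case 3
      define j where "j = nat i"
      have "i = int j" "j \<le> n"
        using 3 by (simp_all add: j_def)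
      moreover have "A (i + 1) = \<gamma> (T (Suc j))"
        using A_curve[of "i + 1"] 3 by (simp add: j_def nat_add_distrib)
      ultimately show ?thesis
        using ordinate_eq_step[of "Suc j"] fst_A[of j] by simp
    qed
  qed
  have "strict_mono_on {1..int n + 1} (snd \<circ> A)"
  proof (rule strict_mono_onI)
    fix i j :: int
    assume "i \<in> {1..int n + 1}" "j \<in> {1..int n + 1}" "i < j"
    then have "snd (\<gamma> (T (nat i))) < snd (\<gamma> (T (nat j)))"
      by (intro strict_mono_onD[OF ordinate_strict_mono]) (auto simp: nat_le_iff le_nat_iff)
    then show "(snd \<circ> A) i < (snd \<circ> A) j"
      using A_curve \<open>i \<in> _\<close> \<open>j \<in> _\<close> by simp
  qed
  then have "inj_on A {1..int n + 1}"
    by (metis inj_on_imageI2 strict_mono_on_imp_inj_on)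
  moreover have "A ` {1..int n + 1} \<subseteq> \<gamma> ` {0..1}"
    using A_curve parameter_in_01 by auto
  moreover have "A (-1) = A (int n + 1) - (1, 1)"
    using A_curve[of "int n + 1"] by (simp add: A_def nat_add_distrib)
  moreover have "snd (A (i + 1) - A i) = fst (A i - A (i - 1))" if "i \<in> {0..int n + 1}" for i
    using staircase[of i] staircase[of "i - 1"] that by simp
  moreover have "A 0 = (0, 0)" and "A (int n + 2) = (1, 1)"
    by (simp_all add: A_def)
  ultimately show ?thesis
    by blast
qed

end

end


theorem corollary2:
  fixes \<gamma> :: "real \<Rightarrow> real \<times> real" and n :: nat
  assumes "continuous_on {0..1} \<gamma>"
    and "\<gamma> 0 = (0, 0)" and "\<gamma> 1 = (1, 1)"
    and "\<forall>t\<in>{0<..<1}. 1 > fst (\<gamma> t) \<and> fst (\<gamma> t) > snd (\<gamma> t)"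
  shows "\<exists>A :: int \<Rightarrow> real \<times> real.
           inj_on A {1..int n + 1} \<and>
           A ` {1..int n + 1} \<subseteq> \<gamma> ` {0..1} \<and>
           A 0 = (0, 0) \<and> A (int n + 2) = (1, 1) \<and>
           A (-1) = A (int n + 1) - (1, 1) \<and>
           (\<forall>i\<in>{0..int n + 1}. snd (A (i + 1) - A i) = fst (A i - A (i - 1)))"
proof -
  interpret curve_staircase \<gamma> n
    using assms by unfold_locales
  obtain T where "T \<in> UNIV \<rightarrow> {0..1}" and "\<And>k. k \<le> n + 1 \<Longrightarrow> defect T k = 0"
    using poincare_miranda[of "n + 1" "\<lambda>k T. defect T k"] continuous_defect
      defect_nonpos_at_lower_face defect_nonneg_at_upper_face by blast
  then show ?thesis
    by (rule staircase_exists)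
qed

end
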